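(* Let $X_1,\dots,X_n$ be i.i.d. $\mathsf{Bernoulli}(p)$ with $p\in[\frac12,1)$, and let $Y_k=X_k\oplus V_k$ for $k=1,\dots,n$, where $V_1,\dots,V_n$ are i.i.d. $\mathsf{Bernoulli}(\alpha)$, independent of $X^n$, with $\alpha\in[0,\frac12)$ and $\bar\alpha>p$. Let $q=\alpha\bar p+\bar\alpha p$ and $$\zeta_n(\varepsilon)=\frac{\bar\alpha^n-\varepsilon^n}{(\bar\alpha p)^n-(\alpha\bar p)^n}.$$ Then there exists $\varepsilon_{\mathsf L}<\bar\alpha$ such that for all $\varepsilon\in[\varepsilon_{\mathsf L},\bar\alpha]$, $$\underline{\mathcal{h}}_n^n(\varepsilon)=1-\zeta_n(\varepsilon)q^n,$$ and the $2^n$-ary Z-channel $\mathsf{Z}_n(\zeta_n(\varepsilon))$ achieves $\underline{\mathcal{h}}_n(\varepsilon)$ on this interval.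
   Context: $\bar a=1-a$; $\oplus$ is addition mod 2; $\mathsf{Bernoulli}(p)$ has $\Pr(\cdot=1)=p$. $\mathsf{P}_{\mathsf{c}}(X^n)=\max_{x^n}P_{X^n}(x^n)$ and $\mathsf{P}_{\mathsf{c}}(X^n|Z^n)=\sum_{z^n}\max_{x^n}P_{X^nZ^n}(x^n,z^n)$. For $\varepsilon\in[\mathsf{P}_{\mathsf{c}}^{1/n}(X^n),\mathsf{P}_{\mathsf{c}}^{1/n}(X^n|Y^n)]$ (here $=[p,\bar\alpha]$), $$\underline{\mathcal{h}}_n(\varepsilon)=\sup\{\mathsf{P}_{\mathsf{c}}^{1/n}(Y^n|Z^n): P_{Z^n|Y^n},\ \mathcal{Z}^n=\{0,1\}^n,\ X^n - Y^n - Z^n,\ \mathsf{P}_{\mathsf{c}}^{1/n}(X^n|Z^n)\le\varepsilon\},$$ with $X^n - Y^n - Z^n$ a Markov chain. The $2^n$-ary Z-channel $\mathsf{Z}_n(\gamma)$ is the channel $\mathsf{W}$ with input and output alphabet $\{0,1\}^n$ given by $\mathsf{W}(y|y)=1$ for $y\ne\mathbf 1$, $\mathsf{W}(\mathbf 0|\mathbf 1)=\gamma$, $\mathsf{W}(\mathbf 1|\mathbf 1)=1-\gamma$, where $\mathbf 0=(0,\dots,0)$, $\mathbf 1=(1,\dots,1)$. "Achieves" means it satisfies the privacy constraint and attains the supremum. *)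

theory Defs
  imports Complex_Main
begin

text \<open>Binary n-tuples are represented as boolean lists of length n (True = 1).\<close>

definition words :: "nat \<Rightarrow> bool list set" where
  "words n = {xs. length xs = n}"

definition bern :: "real \<Rightarrow> bool \<Rightarrow> real" where
  "bern r b = (if b then r else 1 - r)"

text \<open>Joint pmf of (X^n, Y^n): X_k iid Bernoulli(p), Y_k = X_k xor V_k, V_k iid Bernoulli(alpha).\<close>
definition PXY :: "real \<Rightarrow> real \<Rightarrow> nat \<Rightarrow> bool list \<Rightarrow> bool list \<Rightarrow> real" where
  "PXY p \<alpha> n x y = (\<Prod>k<n. bern p (x ! k) * bern \<alpha> ((x ! k) \<noteq> (y ! k)))"

definition PY :: "real \<Rightarrow> real \<Rightarrow> nat \<Rightarrow> bool list \<Rightarrow> real" where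
  "PY p \<alpha> n y = (\<Sum>x\<in>words n. PXY p \<alpha> n x y)"

text \<open>A channel P_{Z|Y} with input and output alphabet {0,1}^n: W y z = P_{Z|Y}(z|y).\<close>
definition is_channel :: "nat \<Rightarrow> (bool list \<Rightarrow> bool list \<Rightarrow> real) \<Rightarrow> bool" where
  "is_channel n W \<longleftrightarrow> (\<forall>y\<in>words n. (\<forall>z\<in>words n. 0 \<le> W y z) \<and> (\<Sum>z\<in>words n. W y z) = 1)"

text \<open>P_c(X^n|Z^n) = sum_z max_x P_{X^n Z^n}(x,z), with Markov chain X - Y - Z.\<close>
definition PcXZ :: "real \<Rightarrow> real \<Rightarrow> nat \<Rightarrow> (bool list \<Rightarrow> bool list \<Rightarrow> real) \<Rightarrow> real" where
  "PcXZ p \<alpha> n W = (\<Sum>z\<in>words n. Max ((\<lambda>x. \<Sum>y\<in>words n. PXY p \<alpha> n x y * W y z) ` words n))"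

definition PcYZ :: "real \<Rightarrow> real \<Rightarrow> nat \<Rightarrow> (bool list \<Rightarrow> bool list \<Rightarrow> real) \<Rightarrow> real" where
  "PcYZ p \<alpha> n W = (\<Sum>z\<in>words n. Max ((\<lambda>y. PY p \<alpha> n y * W y z) ` words n))"

definition feasible :: "real \<Rightarrow> real \<Rightarrow> nat \<Rightarrow> real \<Rightarrow> (bool list \<Rightarrow> bool list \<Rightarrow> real) \<Rightarrow> bool" where
  "feasible p \<alpha> n \<epsilon> W \<longleftrightarrow> is_channel n W \<and> root n (PcXZ p \<alpha> n W) \<le> \<epsilon>"

definition hlow :: "real \<Rightarrow> real \<Rightarrow> nat \<Rightarrow> real \<Rightarrow> real" where
  "hlow p \<alpha> n \<epsilon> = Sup {root n (PcYZ p \<alpha> n W) | W. feasible p \<alpha> n \<epsilon> W}"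

definition zchan :: "nat \<Rightarrow> real \<Rightarrow> bool list \<Rightarrow> bool list \<Rightarrow> real" where
  "zchan n \<gamma> y z =
     (if y = replicate n True then
        (if z = replicate n False then \<gamma> else if z = replicate n True then 1 - \<gamma> else 0)
      else (if z = y then 1 else 0))"

definition achieves :: "real \<Rightarrow> real \<Rightarrow> nat \<Rightarrow> real \<Rightarrow> (bool list \<Rightarrow> bool list \<Rightarrow> real) \<Rightarrow> bool" where
  "achieves p \<alpha> n \<epsilon> W \<longleftrightarrow> feasible p \<alpha> n \<epsilon> W \<and> root n (PcYZ p \<alpha> n W) = hlow p \<alpha> n \<epsilon>"

definition zeta :: "real \<Rightarrow> real \<Rightarrow> nat \<Rightarrow> real \<Rightarrow> real" where
  "zeta p \<alpha> n \<epsilon> = ((1 - \<alpha>) ^ n - \<epsilon> ^ n) / (((1 - \<alpha>) * p) ^ n - (\<alpha> * (1 - p)) ^ n)"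

end

theory Submission
  imports Defs
begin

text \<open>
  Write \<open>q = Pr(Y\<^sub>k = 1)\<close> and \<open>D = ((1-\<alpha>) p)\<^sup>n - (\<alpha> (1-p))\<^sup>n\<close>.
  Coordinatewise, \<open>(\<alpha> (1-p))\<^sup>n P\<^sub>Y(y) \<le> P\<^sub>X\<^sub>Y(x,y) q\<^sup>n\<close> and
  \<open>P\<^sub>X\<^sub>Y(y,y) q\<^sup>n \<le> ((1-\<alpha>) p)\<^sup>n P\<^sub>Y(y)\<close>. Using, in every output column of a
  channel, the MAP guess of \<open>Y\<close> also as a guess of \<open>X\<close> and summing over the columns gives
  \<open>((1-\<alpha>)\<^sup>n - P\<^sub>c(X|Z)) q\<^sup>n \<le> D (1 - P\<^sub>c(Y|Z))\<close>; so the privacy constraint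
  \<open>P\<^sub>c(X|Z) \<le> \<epsilon>\<^sup>n\<close> forces \<open>P\<^sub>c(Y|Z) \<le> 1 - \<zeta>\<^sub>n(\<epsilon>) q\<^sup>n\<close>.
  Conversely, while the crossover \<open>\<gamma>\<close> of the Z-channel is small, the MAP estimate of \<open>X\<close>
  from its output is the output itself; this gives \<open>P\<^sub>c(X|Z) = (1-\<alpha>)\<^sup>n - \<gamma> D\<close> and
  \<open>P\<^sub>c(Y|Z) \<ge> 1 - \<gamma> q\<^sup>n\<close>, so \<open>\<gamma> = \<zeta>\<^sub>n(\<epsilon>)\<close> attains the bound, and
  \<open>\<zeta>\<^sub>n(\<epsilon>)\<close> is small enough for \<open>\<epsilon>\<close> near \<open>1-\<alpha>\<close>.
\<close>

lemma words_Suc: "words (Suc n) = Cons True ` words n \<union> Cons False ` words n"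
proof
  show "words (Suc n) \<subseteq> Cons True ` words n \<union> Cons False ` words n"
  proof
    fix x assume "x \<in> words (Suc n)"
    then obtain b ys where "x = b # ys" "length ys = n" by (auto simp: words_def length_Suc_conv)
    then show "x \<in> Cons True ` words n \<union> Cons False ` words n" by (cases b) (auto simp: words_def)
  qed
qed (auto simp: words_def)

lemma finite_words [simp]: "finite (words n)"
  using finite_lists_length_eq[of "UNIV :: bool set" n] by (simp add: words_def)

lemma replicate_in_words [simp]: "replicate n b \<in> words n"
  by (simp add: words_def)

lemma sum_words_prod:
  fixes g :: "nat \<Rightarrow> bool \<Rightarrow> 'a::comm_semiring_1"
  shows "(\<Sum>x\<in>words n. \<Prod>k<n. g k (x!k)) = (\<Prod>k<n. g k True + g k False)"
proof (induction n arbitrary: g)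
  case 0
  then show ?case by (simp add: words_def)
next
  case (Suc n)
  have "(\<Sum>x\<in>Cons b ` words n. \<Prod>k<Suc n. g k (x!k)) = g 0 b * (\<Prod>k<n. g (Suc k) True + g (Suc k) False)"
    for b
    using Suc.IH[of "\<lambda>k. g (Suc k)"]
    by (simp add: sum.reindex prod.lessThan_Suc_shift flip: sum_distrib_left del: prod.lessThan_Suc)
  moreover have "Cons True ` words n \<inter> Cons False ` words n = {}"
    by auto
  ultimately show ?case
    by (simp add: words_Suc sum.union_disjoint distrib_right prod.lessThan_Suc_shift
             del: prod.lessThan_Suc)
qed

definition qY :: "real \<Rightarrow> real \<Rightarrow> real" where
  "qY p \<alpha> = \<alpha> * (1 - p) + (1 - \<alpha>) * p"

definition zeta_den :: "real \<Rightarrow> real \<Rightarrow> nat \<Rightarrow> real" where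
  "zeta_den p \<alpha> n = ((1 - \<alpha>) * p) ^ n - (\<alpha> * (1 - p)) ^ n"

text \<open>Up to this crossover the all-zeros input stays a MAP estimate of \<open>X\<close> in the all-zeros
  output column of the Z-channel.\<close>

definition zchan_gamma_max :: "real \<Rightarrow> real \<Rightarrow> nat \<Rightarrow> real" where
  "zchan_gamma_max p \<alpha> n = ((1 - p) * (1 - \<alpha>)) ^ n - p * \<alpha> * ((1 - p) * (1 - \<alpha>)) ^ (n - 1)"

lemma zeta_eq: "zeta p \<alpha> n \<epsilon> = ((1 - \<alpha>) ^ n - \<epsilon> ^ n) / zeta_den p \<alpha> n"
  by (simp add: zeta_def zeta_den_def)

lemma bern_nonneg: "0 \<le> r \<Longrightarrow> r \<le> 1 \<Longrightarrow> 0 \<le> bern r b"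
  by (simp add: bern_def)

lemma PY_eq_prod: "PY p \<alpha> n y = (\<Prod>k<n. bern (qY p \<alpha>) (y!k))"
  unfolding PY_def PXY_def sum_words_prod[where g="\<lambda>k a. bern p a * bern \<alpha> (a \<noteq> y!k)"]
  by (rule prod.cong) (auto simp: bern_def qY_def algebra_simps)

lemma sum_PY: "(\<Sum>y\<in>words n. PY p \<alpha> n y) = 1"
  unfolding PY_eq_prod sum_words_prod[where g="\<lambda>k. bern (qY p \<alpha>)"] by (simp add: bern_def)

lemma PY_replicate_True: "PY p \<alpha> n (replicate n True) = qY p \<alpha> ^ n"
  by (simp add: PY_eq_prod bern_def)

lemma PXY_diag: "PXY p \<alpha> n y y = (\<Prod>k<n. bern p (y!k) * (1 - \<alpha>))"
  by (simp add: PXY_def bern_def)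

lemma sum_PXY_diag: "(\<Sum>y\<in>words n. PXY p \<alpha> n y y) = (1 - \<alpha>) ^ n"
  unfolding PXY_diag sum_words_prod[where g="\<lambda>k b. bern p b * (1 - \<alpha>)"]
  by (simp add: bern_def algebra_simps)

lemma PXY_replicate: "PXY p \<alpha> n (replicate n a) (replicate n b) = (bern p a * bern \<alpha> (a \<noteq> b)) ^ n"
  by (simp add: PXY_def)

lemma sum_channel_output:
  assumes "is_channel n W"
  shows "(\<Sum>z\<in>words n. \<Sum>y\<in>words n. f y * W y z) = (\<Sum>y\<in>words n. f y)"
  using assms by (simp add: sum.swap[of _ "words n"] is_channel_def flip: sum_distrib_left)

lemma zchan_is_channel:
  assumes "1 \<le> n" "0 \<le> \<gamma>" "\<gamma> \<le> 1"
  shows "is_channel n (zchan n \<gamma>)"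
proof -
  have "replicate n True \<noteq> replicate n False"
    using assms(1) by (cases n) auto
  then show ?thesis
    using assms(2,3) by (auto simp: is_channel_def zchan_def sum.If_cases)
qed

lemma zchan_diag: "1 \<le> n \<Longrightarrow> zchan n \<gamma> z z = (if z = replicate n True then 1 - \<gamma> else 1)"
  by (cases n) (auto simp: zchan_def)

lemma sum_zchan_column:
  assumes "z \<in> words n"
  shows "(\<Sum>y\<in>words n. f y * zchan n \<gamma> y z)
       = f (replicate n True) * zchan n \<gamma> (replicate n True) z + (if z = replicate n True then 0 else f z)"
proof -
  have "(\<Sum>y\<in>words n - {replicate n True}. f y * zchan n \<gamma> y z)
      = (\<Sum>y\<in>words n - {replicate n True}. if y = z then f y else 0)"
    by (rule sum.cong) (auto simp: zchan_def)
  then show ?thesis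
    using assms by (simp add: sum.remove[of _ "replicate n True"])
qed

lemma PcYZ_zchan_ge:
  assumes "1 \<le> n"
  shows "1 - \<gamma> * qY p \<alpha> ^ n \<le> PcYZ p \<alpha> n (zchan n \<gamma>)"
proof -
  have "(\<Sum>z\<in>words n. PY p \<alpha> n z * zchan n \<gamma> z z)
      = (\<Sum>z\<in>words n. PY p \<alpha> n z - (if z = replicate n True then \<gamma> * PY p \<alpha> n z else 0))"
    using assms by (intro sum.cong) (auto simp: zchan_diag algebra_simps)
  then have "1 - \<gamma> * qY p \<alpha> ^ n = (\<Sum>z\<in>words n. PY p \<alpha> n z * zchan n \<gamma> z z)"
    by (simp add: sum_subtractf sum_PY PY_replicate_True)
  also have "\<dots> \<le> PcYZ p \<alpha> n (zchan n \<gamma>)"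
    unfolding PcYZ_def by (intro sum_mono Max_ge) auto
  finally show ?thesis .
qed

lemma achieves_if_maximal:
  assumes "0 < n" "feasible p \<alpha> n \<epsilon> W0"
    and "\<And>W. feasible p \<alpha> n \<epsilon> W \<Longrightarrow> PcYZ p \<alpha> n W \<le> PcYZ p \<alpha> n W0"
  shows "achieves p \<alpha> n \<epsilon> W0"
  unfolding achieves_def hlow_def
  using assms by (auto intro!: cSup_eq_maximum[symmetric])

context
  fixes p \<alpha> :: real
  assumes p_ge: "1/2 \<le> p" and p_le: "p \<le> 1" and \<alpha>_ge: "0 \<le> \<alpha>" and \<alpha>_le: "\<alpha> \<le> 1/2"
begin

lemma qY_bounds: "1/2 \<le> qY p \<alpha>" "qY p \<alpha> \<le> p"
proof -
  have "qY p \<alpha> - 1/2 = (1 - 2*\<alpha>) * (p - 1/2)" "p - qY p \<alpha> = \<alpha> * (2*p - 1)"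
    by (simp_all add: qY_def algebra_simps)
  moreover have "0 \<le> (1 - 2*\<alpha>) * (p - 1/2)" "0 \<le> \<alpha> * (2*p - 1)"
    using p_ge \<alpha>_ge \<alpha>_le by simp_all
  ultimately show "1/2 \<le> qY p \<alpha>" "qY p \<alpha> \<le> p"
    by linarith+
qed

lemma PXY_diag_qY_le: "PXY p \<alpha> n y y * qY p \<alpha> ^ n \<le> ((1 - \<alpha>) * p) ^ n * PY p \<alpha> n y"
proof -
  have "bern p b * (1 - \<alpha>) * qY p \<alpha> \<le> (1 - \<alpha>) * p * bern (qY p \<alpha>) b" for b
  proof (cases b)
    case False
    have "(1 - p) * qY p \<alpha> \<le> p * (1 - qY p \<alpha>)"
      using qY_bounds by (simp add: algebra_simps)
    then show ?thesis
      using False \<alpha>_le by (simp add: bern_def mult_left_mono mult.assoc mult.left_commute)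
  qed (simp add: bern_def)
  then have "(\<Prod>k<n. bern p (y!k) * (1 - \<alpha>) * qY p \<alpha>) \<le> (\<Prod>k<n. (1 - \<alpha>) * p * bern (qY p \<alpha>) (y!k))"
    using p_le p_ge \<alpha>_le qY_bounds by (intro prod_mono) (simp add: bern_def)
  then show ?thesis
    by (simp add: PXY_diag PY_eq_prod prod.distrib)
qed

lemma PY_le_PXY: "(\<alpha> * (1 - p)) ^ n * PY p \<alpha> n y \<le> PXY p \<alpha> n x y * qY p \<alpha> ^ n"
proof -
  have q: "1 - qY p \<alpha> \<le> qY p \<alpha>" "qY p \<alpha> \<le> 1"
    using qY_bounds p_le by linarith+
  have "(1 - p) * (1 - qY p \<alpha>) \<le> p * qY p \<alpha>" "\<alpha> * (1 - qY p \<alpha>) \<le> (1 - \<alpha>) * qY p \<alpha>"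
    using q p_ge \<alpha>_ge \<alpha>_le by (auto intro!: mult_mono)
  then have "\<alpha> * (1 - p) * bern (qY p \<alpha>) b \<le> bern p a * bern \<alpha> (a \<noteq> b) * qY p \<alpha>" for a b
    using q p_ge p_le \<alpha>_ge \<alpha>_le
    by (cases a; cases b)
      (auto simp: bern_def mult.assoc mult.left_commute[of \<alpha>] intro!: mult_mono mult_left_mono)
  then have "(\<Prod>k<n. \<alpha> * (1 - p) * bern (qY p \<alpha>) (y!k))
      \<le> (\<Prod>k<n. bern p (x!k) * bern \<alpha> (x!k \<noteq> y!k) * qY p \<alpha>)"
    using p_le \<alpha>_ge q by (intro prod_mono) (simp add: bern_def)
  then show ?thesis
    by (simp add: PXY_def PY_eq_prod prod.distrib)
qed

lemma PXY_gap_le: "(PXY p \<alpha> n y y - PXY p \<alpha> n x y) * qY p \<alpha> ^ n \<le> zeta_den p \<alpha> n * PY p \<alpha> n y"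
  using PXY_diag_qY_le[of n y] PY_le_PXY[of n y x] by (simp add: zeta_den_def algebra_simps)

lemma column_gap_le:
  assumes w: "\<And>y. y \<in> words n \<Longrightarrow> 0 \<le> w y"
  shows "((\<Sum>y\<in>words n. PXY p \<alpha> n y y * w y) - Max ((\<lambda>x. \<Sum>y\<in>words n. PXY p \<alpha> n x y * w y) ` words n))
           * qY p \<alpha> ^ n
         \<le> zeta_den p \<alpha> n * ((\<Sum>y\<in>words n. PY p \<alpha> n y * w y) - Max ((\<lambda>y. PY p \<alpha> n y * w y) ` words n))"
proof -
  txt \<open>The MAP guess \<open>y0\<close> of \<open>Y\<close> is also used as a guess of \<open>X\<close>.\<close>
  obtain y0 where y0: "y0 \<in> words n" and max_y0: "Max ((\<lambda>y. PY p \<alpha> n y * w y) ` words n) = PY p \<alpha> n y0 * w y0"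
    using Max_in[of "(\<lambda>y. PY p \<alpha> n y * w y) ` words n"] replicate_in_words by fastforce
  have "((\<Sum>y\<in>words n. PXY p \<alpha> n y y * w y) - Max ((\<lambda>x. \<Sum>y\<in>words n. PXY p \<alpha> n x y * w y) ` words n))
          * qY p \<alpha> ^ n
        \<le> ((\<Sum>y\<in>words n. PXY p \<alpha> n y y * w y) - (\<Sum>y\<in>words n. PXY p \<alpha> n y0 y * w y)) * qY p \<alpha> ^ n"
    using y0 qY_bounds by (intro mult_right_mono diff_left_mono Max_ge) auto
  also have "\<dots> = (\<Sum>y\<in>words n. (PXY p \<alpha> n y y - PXY p \<alpha> n y0 y) * qY p \<alpha> ^ n * w y)"
    unfolding sum_subtractf[symmetric] sum_distrib_right by (rule sum.cong) (auto simp: algebra_simps)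
  also have "\<dots> = (\<Sum>y\<in>words n - {y0}. (PXY p \<alpha> n y y - PXY p \<alpha> n y0 y) * qY p \<alpha> ^ n * w y)"
    using y0 by (simp add: sum.remove)
  also have "\<dots> \<le> (\<Sum>y\<in>words n - {y0}. zeta_den p \<alpha> n * PY p \<alpha> n y * w y)"
    using w PXY_gap_le by (intro sum_mono mult_right_mono) auto
  also have "\<dots> = zeta_den p \<alpha> n * ((\<Sum>y\<in>words n. PY p \<alpha> n y * w y) - PY p \<alpha> n y0 * w y0)"
    using y0 by (simp add: sum.remove sum_distrib_left mult.assoc)
  finally show ?thesis
    unfolding max_y0 .
qed

lemma PcXZ_PcYZ_tradeoff:
  assumes "is_channel n W"
  shows "((1 - \<alpha>) ^ n - PcXZ p \<alpha> n W) * qY p \<alpha> ^ n \<le> zeta_den p \<alpha> n * (1 - PcYZ p \<alpha> n W)"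
proof -
  have diag: "(1 - \<alpha>) ^ n = (\<Sum>z\<in>words n. \<Sum>y\<in>words n. PXY p \<alpha> n y y * W y z)"
    by (simp add: sum_channel_output[OF assms] sum_PXY_diag)
  have "((1 - \<alpha>) ^ n - PcXZ p \<alpha> n W) * qY p \<alpha> ^ n
      = (\<Sum>z\<in>words n. ((\<Sum>y\<in>words n. PXY p \<alpha> n y y * W y z)
            - Max ((\<lambda>x. \<Sum>y\<in>words n. PXY p \<alpha> n x y * W y z) ` words n)) * qY p \<alpha> ^ n)"
    unfolding PcXZ_def diag sum_subtractf[symmetric] sum_distrib_right ..
  also have "\<dots> \<le> (\<Sum>z\<in>words n. zeta_den p \<alpha> n * ((\<Sum>y\<in>words n. PY p \<alpha> n y * W y z)
            - Max ((\<lambda>y. PY p \<alpha> n y * W y z) ` words n)))"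
    using assms by (intro sum_mono column_gap_le) (auto simp: is_channel_def)
  also have "\<dots> = zeta_den p \<alpha> n * (1 - PcYZ p \<alpha> n W)"
    using sum_channel_output[OF assms, of "PY p \<alpha> n"]
    by (simp add: PcYZ_def sum_PY sum_subtractf flip: sum_distrib_left)
  finally show ?thesis .
qed

context
  assumes p\<alpha>_le: "p + \<alpha> \<le> 1"
begin

lemma PXY_le_diag: "PXY p \<alpha> n x y \<le> PXY p \<alpha> n y y"
proof -
  have "(1 - p) * \<alpha> \<le> p * (1 - \<alpha>)"
    using mult_mono[of "1 - p" p \<alpha> "1 - \<alpha>"] p_ge \<alpha>_ge \<alpha>_le by simp
  moreover have "p * \<alpha> \<le> (1 - p) * (1 - \<alpha>)"
    using p\<alpha>_le by (simp add: algebra_simps)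
  ultimately have "bern p a * bern \<alpha> (a \<noteq> b) \<le> bern p b * bern \<alpha> False" for a b
    by (cases a; cases b) (auto simp: bern_def)
  then show ?thesis
    unfolding PXY_def
    using p_le \<alpha>_le \<alpha>_ge p_ge by (intro prod_mono) (auto intro!: mult_nonneg_nonneg bern_nonneg)
qed

lemma PXY_replicate_False_le:
  assumes x: "x \<in> words n" and "x \<noteq> replicate n False"
  shows "PXY p \<alpha> n x (replicate n False) \<le> p * \<alpha> * ((1 - p) * (1 - \<alpha>)) ^ (n - 1)"
proof -
  have "\<exists>k<n. x!k"
  proof (rule ccontr)
    assume "\<not> (\<exists>k<n. x!k)"
    then have "x = replicate n False"
      using x by (auto simp: words_def intro!: nth_equalityI)
    with assms(2) show False ..
  qed
  then obtain k where k: "k < n" "x!k" by blast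
  let ?f = "\<lambda>i. bern p (x!i) * bern \<alpha> (x!i)"
  have "p * \<alpha> \<le> (1 - p) * (1 - \<alpha>)"
    using p\<alpha>_le by (simp add: algebra_simps)
  then have f_le: "?f i \<le> (1 - p) * (1 - \<alpha>)" "0 \<le> ?f i" for i
    using p_ge p_le \<alpha>_ge \<alpha>_le by (auto simp: bern_def)
  have "PXY p \<alpha> n x (replicate n False) = ?f k * (\<Prod>i\<in>{..<n} - {k}. ?f i)"
    using k by (simp add: PXY_def prod.remove)
  also have "\<dots> \<le> p * \<alpha> * (\<Prod>i\<in>{..<n} - {k}. (1 - p) * (1 - \<alpha>))"
  proof -
    have "(\<Prod>i\<in>{..<n} - {k}. ?f i) \<le> (\<Prod>i\<in>{..<n} - {k}. (1 - p) * (1 - \<alpha>))"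
      using f_le by (intro prod_mono) auto
    then show ?thesis
      using k p_ge \<alpha>_ge by (simp add: bern_def mult_left_mono)
  qed
  finally show ?thesis
    using k by simp
qed

lemma zchan_column_le_diag:
  assumes n: "1 \<le> n" and \<gamma>: "0 \<le> \<gamma>" "\<gamma> \<le> 1"
    and \<gamma>_le: "\<gamma> \<le> zchan_gamma_max p \<alpha> n"
    and x: "x \<in> words n" and z: "z \<in> words n"
  shows "(\<Sum>y\<in>words n. PXY p \<alpha> n x y * zchan n \<gamma> y z) \<le> (\<Sum>y\<in>words n. PXY p \<alpha> n z y * zchan n \<gamma> y z)"
proof -
  let ?one = "replicate n True" and ?zero = "replicate n False"
  have "?one \<noteq> ?zero"
    using n by (cases n) auto
  note column = sum_zchan_column[OF z, of "PXY p \<alpha> n _"]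
  consider "z = ?one" | "z = ?zero" | "z \<noteq> ?one" "z \<noteq> ?zero"
    by blast
  then show ?thesis
  proof cases
    case 1
    then show ?thesis
      unfolding column using \<open>?one \<noteq> ?zero\<close> \<gamma> by (simp add: zchan_def mult_right_mono PXY_le_diag)
  next
    case 2
    show ?thesis
    proof (cases "x = ?zero")
      case False
      have "PXY p \<alpha> n ?one ?one \<le> 1"
        using p_ge p_le \<alpha>_ge \<alpha>_le by (simp add: PXY_replicate bern_def power_le_one mult_le_one)
      then have "\<gamma> * PXY p \<alpha> n x ?one \<le> \<gamma>"
        using PXY_le_diag[of n x ?one] \<gamma>(1) by (simp add: mult_left_le)
      then have "PXY p \<alpha> n x ?zero + \<gamma> * PXY p \<alpha> n x ?one \<le> p * \<alpha> * ((1 - p) * (1 - \<alpha>)) ^ (n - 1) + \<gamma>"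
        using PXY_replicate_False_le[OF x False] by linarith
      also have "\<dots> \<le> PXY p \<alpha> n ?zero ?zero + \<gamma> * PXY p \<alpha> n ?zero ?one"
        using \<gamma>_le \<gamma>(1) p_le \<alpha>_ge
        by (simp add: zchan_gamma_max_def PXY_replicate bern_def mult.commute[of "1 - p"] add_increasing2)
      finally show ?thesis
        unfolding column using 2 \<open>?one \<noteq> ?zero\<close> by (simp add: zchan_def algebra_simps)
    qed (simp add: 2)
  next
    case 3
    then show ?thesis
      unfolding column by (simp add: zchan_def PXY_le_diag)
  qed
qed

lemma PcXZ_zchan:
  assumes n: "1 \<le> n" and \<gamma>: "0 \<le> \<gamma>" "\<gamma> \<le> 1"
    and \<gamma>_le: "\<gamma> \<le> zchan_gamma_max p \<alpha> n"
  shows "PcXZ p \<alpha> n (zchan n \<gamma>) = (1 - \<alpha>) ^ n - \<gamma> * zeta_den p \<alpha> n"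
proof -
  let ?one = "replicate n True" and ?zero = "replicate n False"
  have "?one \<noteq> ?zero"
    using n by (cases n) auto
  have "PcXZ p \<alpha> n (zchan n \<gamma>) = (\<Sum>z\<in>words n. \<Sum>y\<in>words n. PXY p \<alpha> n z y * zchan n \<gamma> y z)"
    unfolding PcXZ_def using zchan_column_le_diag[OF assms] by (intro sum.cong refl Max_eqI) auto
  also have "\<dots> = (\<Sum>z\<in>words n. PXY p \<alpha> n z ?one * zchan n \<gamma> ?one z)
                   + (\<Sum>z\<in>words n. if z = ?one then 0 else PXY p \<alpha> n z z)"
    by (simp add: sum_zchan_column sum.distrib cong: sum.cong)
  also have "\<dots> = (\<gamma> * PXY p \<alpha> n ?zero ?one + (1 - \<gamma>) * PXY p \<alpha> n ?one ?one)
                   + ((1 - \<alpha>) ^ n - PXY p \<alpha> n ?one ?one)"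
    using \<open>?one \<noteq> ?zero\<close>
    by (simp add: zchan_def sum.If_cases sum_PXY_diag sum_diff1 if_distrib[of "\<lambda>c. PXY p \<alpha> n _ ?one * c"]
             flip: Diff_eq)
  finally show ?thesis
    by (simp add: PXY_replicate bern_def zeta_den_def algebra_simps)
qed

end

context
  assumes p\<alpha>_less: "p + \<alpha> < 1"
begin

lemma zeta_den_pos: "0 < n \<Longrightarrow> 0 < zeta_den p \<alpha> n"
proof -
  assume "0 < n"
  have "\<alpha> * (1 - p) \<le> \<alpha> * p" "\<alpha> * p < (1 - \<alpha>) * p"
    using p_ge \<alpha>_ge p\<alpha>_less by (auto intro: mult_left_mono)
  with \<open>0 < n\<close> show ?thesis
    using \<alpha>_ge p\<alpha>_less by (simp add: zeta_den_def power_strict_mono)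
qed

lemma zchan_gamma_max_pos:
  assumes "1 \<le> n"
  shows "0 < zchan_gamma_max p \<alpha> n"
proof -
  have "zchan_gamma_max p \<alpha> n = (1 - p - \<alpha>) * ((1 - p) * (1 - \<alpha>)) ^ (n - 1)"
    using assms by (cases n) (auto simp: zchan_gamma_max_def algebra_simps)
  then show ?thesis
    using p\<alpha>_less p_ge \<alpha>_ge by simp
qed

lemma zeta_small_near_top:
  assumes "0 < n" "0 < \<Gamma>"
  shows "\<exists>\<epsilon>L. p \<le> \<epsilon>L \<and> \<epsilon>L < 1 - \<alpha> \<and>
           (\<forall>\<epsilon>. \<epsilon>L \<le> \<epsilon> \<and> \<epsilon> \<le> 1 - \<alpha> \<longrightarrow> 0 \<le> zeta p \<alpha> n \<epsilon> \<and> zeta p \<alpha> n \<epsilon> \<le> \<Gamma>)"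
proof -
  define A where "A = max 0 ((1 - \<alpha>) ^ n - \<Gamma> * zeta_den p \<alpha> n)"
  have A: "0 \<le> A" "A < (1 - \<alpha>) ^ n"
    using assms zeta_den_pos p\<alpha>_less p_ge by (auto simp: A_def)
  show ?thesis
  proof (intro exI conjI allI impI)
    have "root n A < root n ((1 - \<alpha>) ^ n)"
      using A assms by simp
    then show "max p (root n A) < 1 - \<alpha>"
      using assms \<alpha>_le p\<alpha>_less by (simp add: real_root_power_cancel)
  next
    fix \<epsilon> assume \<epsilon>: "max p (root n A) \<le> \<epsilon> \<and> \<epsilon> \<le> 1 - \<alpha>"
    then have "A \<le> \<epsilon> ^ n" "\<epsilon> ^ n \<le> (1 - \<alpha>) ^ n"
      using A assms p_ge power_mono[of "root n A" \<epsilon> n] power_mono[of \<epsilon> "1 - \<alpha>" n] by auto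
    then show "0 \<le> zeta p \<alpha> n \<epsilon>" "zeta p \<alpha> n \<epsilon> \<le> \<Gamma>"
      using zeta_den_pos[OF assms(1)] by (auto simp: zeta_eq A_def pos_divide_le_eq)
  qed simp
qed

lemma zchan_achieves:
  assumes n: "1 \<le> n" and \<epsilon>: "0 \<le> \<epsilon>"
    and \<zeta>: "0 \<le> zeta p \<alpha> n \<epsilon>" "zeta p \<alpha> n \<epsilon> \<le> 1"
      "zeta p \<alpha> n \<epsilon> \<le> zchan_gamma_max p \<alpha> n"
  shows "hlow p \<alpha> n \<epsilon> ^ n = 1 - zeta p \<alpha> n \<epsilon> * qY p \<alpha> ^ n
         \<and> achieves p \<alpha> n \<epsilon> (zchan n (zeta p \<alpha> n \<epsilon>))"
proof -
  let ?\<zeta> = "zeta p \<alpha> n \<epsilon>"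
  have D: "0 < zeta_den p \<alpha> n"
    using n zeta_den_pos by simp
  then have \<zeta>D: "?\<zeta> * zeta_den p \<alpha> n = (1 - \<alpha>) ^ n - \<epsilon> ^ n"
    by (simp add: zeta_eq)
  have root_\<epsilon>: "root n (\<epsilon> ^ n) = \<epsilon>"
    using n \<epsilon> by (simp add: real_root_power_cancel)
  have upper: "PcYZ p \<alpha> n W \<le> 1 - ?\<zeta> * qY p \<alpha> ^ n" if "feasible p \<alpha> n \<epsilon> W" for W
  proof -
    have "PcXZ p \<alpha> n W \<le> \<epsilon> ^ n"
      using that n root_\<epsilon> by (metis feasible_def real_root_le_iff less_le_trans zero_less_one)
    then have "zeta_den p \<alpha> n * (?\<zeta> * qY p \<alpha> ^ n) \<le> ((1 - \<alpha>) ^ n - PcXZ p \<alpha> n W) * qY p \<alpha> ^ n"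
      using \<zeta>D qY_bounds by (simp add: mult.assoc[symmetric] mult.commute[of "zeta_den p \<alpha> n"] mult_right_mono)
    also have "\<dots> \<le> zeta_den p \<alpha> n * (1 - PcYZ p \<alpha> n W)"
      using that by (simp add: feasible_def PcXZ_PcYZ_tradeoff)
    finally show ?thesis
      using D by simp
  qed
  have feasible: "feasible p \<alpha> n \<epsilon> (zchan n ?\<zeta>)"
    using n \<zeta> p\<alpha>_less zchan_is_channel PcXZ_zchan \<zeta>D root_\<epsilon> by (simp add: feasible_def)
  have PcYZ: "PcYZ p \<alpha> n (zchan n ?\<zeta>) = 1 - ?\<zeta> * qY p \<alpha> ^ n"
    using upper[OF feasible] PcYZ_zchan_ge[OF n] by (simp add: order_antisym)
  have achieves: "achieves p \<alpha> n \<epsilon> (zchan n ?\<zeta>)"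
    using n feasible upper PcYZ by (intro achieves_if_maximal) auto
  have "0 \<le> 1 - ?\<zeta> * qY p \<alpha> ^ n"
    using \<zeta> qY_bounds p_le by (simp add: mult_le_one power_le_one)
  then have "root n (PcYZ p \<alpha> n (zchan n ?\<zeta>)) ^ n = 1 - ?\<zeta> * qY p \<alpha> ^ n"
    using n PcYZ by (simp add: real_root_pow_pos2)
  then show ?thesis
    using achieves by (simp add: achieves_def)
qed

end

end

theorem theorem4:
  fixes p \<alpha> :: real and n :: nat
  assumes "n \<ge> 1"
    and "1/2 \<le> p" and "p < 1"
    and "0 \<le> \<alpha>" and "\<alpha> < 1/2" and "1 - \<alpha> > p"
  shows "\<exists>\<epsilon>L. p \<le> \<epsilon>L \<and> \<epsilon>L < 1 - \<alpha> \<and>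
          (\<forall>\<epsilon>. \<epsilon>L \<le> \<epsilon> \<and> \<epsilon> \<le> 1 - \<alpha> \<longrightarrow>
             (hlow p \<alpha> n \<epsilon>) ^ n = 1 - zeta p \<alpha> n \<epsilon> * (\<alpha> * (1 - p) + (1 - \<alpha>) * p) ^ n \<and>
             achieves p \<alpha> n \<epsilon> (zchan n (zeta p \<alpha> n \<epsilon>)))"
proof -
  have setting: "1/2 \<le> p" "p \<le> 1" "0 \<le> \<alpha>" "\<alpha> \<le> 1/2" "p + \<alpha> < 1"
    using assms by auto
  define \<Gamma> where "\<Gamma> = min 1 (zchan_gamma_max p \<alpha> n)"
  have "0 < \<Gamma>"
    using zchan_gamma_max_pos[OF setting assms(1)] by (simp add: \<Gamma>_def)
  then obtain \<epsilon>L where \<epsilon>L: "p \<le> \<epsilon>L" "\<epsilon>L < 1 - \<alpha>"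
    and small: "\<And>\<epsilon>. \<epsilon>L \<le> \<epsilon> \<and> \<epsilon> \<le> 1 - \<alpha> \<Longrightarrow> 0 \<le> zeta p \<alpha> n \<epsilon> \<and> zeta p \<alpha> n \<epsilon> \<le> \<Gamma>"
    using zeta_small_near_top[OF setting, of n \<Gamma>] assms(1) by auto
  show ?thesis
  proof (intro exI[of _ \<epsilon>L] conjI allI impI \<epsilon>L)
    fix \<epsilon> assume "\<epsilon>L \<le> \<epsilon> \<and> \<epsilon> \<le> 1 - \<alpha>"
    then show "hlow p \<alpha> n \<epsilon> ^ n = 1 - zeta p \<alpha> n \<epsilon> * (\<alpha> * (1 - p) + (1 - \<alpha>) * p) ^ n"
      and "achieves p \<alpha> n \<epsilon> (zchan n (zeta p \<alpha> n \<epsilon>))"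
      using zchan_achieves[OF setting assms(1), of \<epsilon>] small[of \<epsilon>] \<epsilon>L(1) assms(2)
      unfolding \<Gamma>_def qY_def by simp_all
  qed
qed

end
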